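(* Let $\phi:\mathbb{R}^{d}\to\mathbb{R}^{d}$ be a $C^{2}$ diffeomorphism, $x_{1}\in\mathbb{R}^{d}$, $v_{1}\in\mathbb{R}^{d}$ with $\|v_{1}\|=1$, and $x_{j}=\phi^{j-1}(x_{1})$. If $x_{1},\ldots,x_{D-1}$ are distinct, then the $(D-1)\times D_{\alpha}$ matrix $H(x_{1},v_{1})$ (defined in the context) has rank $D-1$, i.e. rank equal to its number of rows.
   Context: $\pi_{1}$ is the first coordinate projection, $\mathbf{e}_{1}=(1,0,\ldots,0)$. For a multi-index $\alpha\in\mathbb{Z}_{\geq0}^{d}$, $p_{\alpha}(x)=\prod_i(\pi_{i}x)^{\alpha_{i}}$; $\mathcal{I}_{2D-1}$ is the set of multi-indices with $|\alpha|\leq2D-1$, of cardinality $D_{\alpha}$. For $c=(c_{\alpha})\in\mathbb{R}^{D_{\alpha}}$, $\phi_{c}(x)=\phi(x)+\mathbf{e}_{1}\sum_{\alpha\in\mathcal{I}_{2D-1}}c_{\alpha}p_{\alpha}(x)$. The matrix $H(x_{1},v_{1})$ has row $j$ ($j=1,\ldots,D-1$) equal to the gradient with respect to $c$ at $c=0$ of $c\mapsto\pi_{1}\big(D(\phi_{c}^{j})(x_{1})\,v_{1}\big)$, where $D(\phi_c^j)(x_1)$ is the Jacobian matrix of $\phi_c^j$ at $x_1$. Equivalently, writing $F_{c}(x)=(\pi_{1}x,\pi_{1}\phi_{c}(x),\ldots,\pi_{1}\phi_{c}^{D-1}(x))$, one has $dF_{c}(x_{1})v_{1}=dF_{0}(x_{1})v_{1}+\binom{0}{H(x_{1},v_{1})}c+O(\|c\|^{2})$;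 e.g. the first row is $v_{1}^{T}\nabla p_{\alpha}(x_{1})$. *)

theory Defs
  imports "HOL-Analysis.Analysis"
begin

text \<open>Coordinates of R^d are indexed by a finite, well-ordered type 'n; the first
  coordinate (pi_1, e_1) is the least index.\<close>

definition first_idx :: "'n::{finite,wellorder}" where
  "first_idx = (LEAST i. True)"

definition pi1 :: "(real, 'n::{finite,wellorder}) vec \<Rightarrow> real" where
  "pi1 x = x $ first_idx"

definition e1 :: "(real, 'n::{finite,wellorder}) vec" where
  "e1 = axis first_idx 1"

definition C2 :: "((real, 'n::finite) vec \<Rightarrow> (real, 'n) vec) \<Rightarrow> bool" where
  "C2 f \<longleftrightarrow> (\<exists>f' f''.
     (\<forall>x. (f has_derivative blinfun_apply (f' x)) (at x)) \<and>
     (\<forall>x. (f' has_derivative blinfun_apply (f'' x)) (at x)) \<and>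
     continuous_on UNIV f'')"

definition C2_diffeo :: "((real, 'n::finite) vec \<Rightarrow> (real, 'n) vec) \<Rightarrow> bool" where
  "C2_diffeo f \<longleftrightarrow> bij f \<and> C2 f \<and> C2 (inv f)"

definition multi_idx :: "nat \<Rightarrow> ('n::finite \<Rightarrow> nat) set" where
  "multi_idx D = {\<alpha>. (\<Sum>i\<in>UNIV. \<alpha> i) \<le> 2 * D - 1}"

definition mono_p :: "('n::finite \<Rightarrow> nat) \<Rightarrow> (real, 'n) vec \<Rightarrow> real" where
  "mono_p \<alpha> x = (\<Prod>i\<in>UNIV. (x $ i) ^ (\<alpha> i))"

text \<open>Perturbation phi_c; c ranges over functions on multi-indices (only the values on
  multi_idx D matter, so this is R^{D_alpha}).\<close>

definition phi_c :: "nat \<Rightarrow> ((real, 'n::{finite,wellorder}) vec \<Rightarrow> (real, 'n) vec) \<Rightarrow> (('n \<Rightarrow> nat) \<Rightarrow> real)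
    \<Rightarrow> (real, 'n) vec \<Rightarrow> (real, 'n) vec" where
  "phi_c D \<phi> c x = \<phi> x + (\<Sum>\<alpha>\<in>multi_idx D. c \<alpha> * mono_p \<alpha> x) *\<^sub>R e1"

text \<open>Entry (j, alpha) of H(x1,v1): the alpha-th component of the gradient at c = 0 of
  c |-> pi_1 (D(phi_c^j)(x1) v1), i.e. the partial derivative in c_alpha.\<close>

definition H_entry :: "nat \<Rightarrow> ((real, 'n::{finite,wellorder}) vec \<Rightarrow> (real, 'n) vec) \<Rightarrow> (real, 'n) vec \<Rightarrow> (real, 'n) vec
    \<Rightarrow> nat \<Rightarrow> ('n \<Rightarrow> nat) \<Rightarrow> real" where
  "H_entry D \<phi> x1 v1 j \<alpha> =
     deriv (\<lambda>t. pi1 (frechet_derivative (phi_c D \<phi> (\<lambda>\<beta>. if \<beta> = \<alpha> then t else 0) ^^ j)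
                        (at x1) v1)) 0"

text \<open>A matrix with rows indexed by R and columns by C has rank equal to its number of
  rows iff its rows are linearly independent.\<close>

definition full_row_rank :: "nat set \<Rightarrow> 'c set \<Rightarrow> (nat \<Rightarrow> 'c \<Rightarrow> real) \<Rightarrow> bool" where
  "full_row_rank R C M \<longleftrightarrow>
     (\<forall>a. (\<forall>\<alpha>\<in>C. (\<Sum>j\<in>R. a j * M j \<alpha>) = 0) \<longrightarrow> (\<forall>j\<in>R. a j = 0))"

end

theory Submission
  imports Defs
begin

text \<open>Write \<open>y\<^sub>i = \<phi>\<^sup>i(x\<^sub>1)\<close> and \<open>W\<^sub>i = D\<phi>\<^sup>i(x\<^sub>1) v\<^sub>1\<close>. Replacing the monomial in
  the perturbation \<open>\<phi> + t p\<^sub>\<alpha> e\<^sub>1\<close> by an arbitrary polynomial g, the derivative at \<open>t = 0\<close>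
  of \<open>\<pi>\<^sub>1(D(\<phi>\<^sub>t\<^sup>j)(x\<^sub>1) v\<^sub>1)\<close> is linear in g; for \<open>deg g \<le> 2D - 1\<close> it therefore gives,
  as a function of j, a vector in the column span of H. If g vanishes to second order at
  \<open>y\<^sub>0, \<dots>, y\<^sub>m\<^sub>-\<^sub>1\<close>, this vector is 0 for \<open>j \<le> m\<close> and equals \<open>Dg(y\<^sub>m) W\<^sub>m\<close> at
  \<open>j = m + 1\<close>. The polynomial \<open>g(x) = \<langle>W\<^sub>m, x - y\<^sub>m\<rangle> \<Prod>\<^sub>i\<^sub><\<^sub>m |x - y\<^sub>i|\<^sup>2\<close> of degree
  \<open>2m + 1\<close> has \<open>Dg(y\<^sub>m) W\<^sub>m = |W\<^sub>m|\<^sup>2 \<Prod>\<^sub>i\<^sub><\<^sub>m |y\<^sub>m - y\<^sub>i|\<^sup>2 \<noteq> 0\<close>, because the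
  orbit points are distinct and \<open>D\<phi>\<close> is invertible. For \<open>m = 0, \<dots>, D - 2\<close> these vectors
  form a triangular system with nonzero diagonal, so no nontrivial row combination of H
  vanishes.\<close>

type_synonym 'n rv = "(real, 'n) vec"

lemma frechet_derivative_add_at:
  assumes "f differentiable (at y)" "g differentiable (at y)"
  shows "frechet_derivative (\<lambda>x. f x + g x) (at y) =
    (\<lambda>v. frechet_derivative f (at y) v + frechet_derivative g (at y) v)"
  using assms frechet_derivative_works
  by (blast intro: frechet_derivative_at[symmetric] has_derivative_add)

lemma frechet_derivative_scale_at:
  fixes f :: "'a::real_normed_vector \<Rightarrow> real"
  assumes "f differentiable (at y)"
  shows "frechet_derivative (\<lambda>x. c * f x) (at y) = (\<lambda>v. c * frechet_derivative f (at y) v)"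
  using assms frechet_derivative_works
  by (blast intro: frechet_derivative_at[symmetric] has_derivative_mult_right)

lemma has_derivative_mult_flat_zero:
  fixes f g :: "'a::real_normed_vector \<Rightarrow> real"
  assumes "f differentiable (at y)" "(g has_derivative (\<lambda>v. 0)) (at y)" "g y = 0"
  shows "((\<lambda>x. f x * g x) has_derivative (\<lambda>v. 0)) (at y)"
proof -
  from assms(1) obtain f' where "(f has_derivative f') (at y)" by (auto simp: differentiable_def)
  from has_derivative_mult[OF this assms(2)] show ?thesis using assms(3) by simp
qed

lemma has_derivative_ident_mult_isCont:
  fixes k :: "real \<Rightarrow> real"
  assumes "isCont k 0"
  shows "((\<lambda>t. t * k t) has_derivative (\<lambda>h. h * k 0)) (at 0)"
proof -
  have "DERIV (\<lambda>t. t * k t) 0 :> k 0"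
    by (subst CARAT_DERIV) (rule exI[of _ k], use assms in auto)
  then show ?thesis unfolding has_field_derivative_def
    by (rule has_derivative_eq_rhs) (auto simp: mult.commute)
qed

lemma inj_derivative_of_left_inverse:
  assumes "\<And>x. \<psi> (\<phi> x) = x" "(\<phi> has_derivative \<phi>') (at y)" "(\<psi> has_derivative \<psi>') (at (\<phi> y))"
  shows "inj \<phi>'"
proof -
  have "((\<psi> \<circ> \<phi>) has_derivative (\<psi>' \<circ> \<phi>')) (at y)"
    using diff_chain_at assms(2,3) by blast
  moreover have "\<psi> \<circ> \<phi> = id" using assms(1) by auto
  ultimately have "\<psi>' \<circ> \<phi>' = id"
    using has_derivative_unique has_derivative_id by metis
  then show ?thesis by (metis inj_on_id inj_on_imageI2)
qed

text \<open>The column span of M, described dually (equivalent to the usual one in finite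
  dimension).\<close>

definition in_col_span :: "nat set \<Rightarrow> 'c set \<Rightarrow> (nat \<Rightarrow> 'c \<Rightarrow> real) \<Rightarrow> (nat \<Rightarrow> real) \<Rightarrow> bool" where
  "in_col_span R C M \<Lambda> \<longleftrightarrow>
     (\<forall>a. (\<forall>\<alpha>\<in>C. (\<Sum>j\<in>R. a j * M j \<alpha>) = 0) \<longrightarrow> (\<Sum>j\<in>R. a j * \<Lambda> j) = 0)"

lemma full_row_rankI_triangular:
  assumes "finite R"
    and "\<And>J. J \<in> R \<Longrightarrow> \<exists>\<Lambda>. in_col_span R C M \<Lambda> \<and> (\<forall>k\<in>R. k < J \<longrightarrow> \<Lambda> k = 0) \<and> \<Lambda> J \<noteq> 0"
  shows "full_row_rank R C M"
  unfolding full_row_rank_def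
proof (intro allI impI ballI, rule ccontr)
  fix a j
  assume a: "\<forall>\<alpha>\<in>C. (\<Sum>j\<in>R. a j * M j \<alpha>) = 0" and "j \<in> R" "a j \<noteq> 0"
  define S where "S = {j \<in> R. a j \<noteq> 0}"
  have S: "finite S" "S \<noteq> {}"
    using assms(1) \<open>j \<in> R\<close> \<open>a j \<noteq> 0\<close> by (auto simp: S_def)
  define J where "J = Max S"
  have "J \<in> S" using Max_in[OF S] by (simp add: J_def)
  then have J: "J \<in> R" "a J \<noteq> 0" by (auto simp: S_def)
  have J_max: "k \<le> J" if "k \<in> R" "a k \<noteq> 0" for k
    using Max_ge[OF S(1)] that by (simp add: J_def S_def)
  obtain \<Lambda> where \<Lambda>: "(\<Sum>j\<in>R. a j * \<Lambda> j) = 0" "\<And>k. k \<in> R \<Longrightarrow> k < J \<Longrightarrow> \<Lambda> k = 0" "\<Lambda> J \<noteq> 0"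
    using assms(2)[OF J(1)] a unfolding in_col_span_def by blast
  have "(\<Sum>j\<in>R. a j * \<Lambda> j) = (\<Sum>j\<in>R. if j = J then a J * \<Lambda> J else 0)"
    using J_max \<Lambda>(2) by (intro sum.cong) (auto simp: not_less order.order_iff_strict)
  also have "\<dots> = a J * \<Lambda> J"
    using J(1) assms(1) by simp
  finally show False
    using \<Lambda>(1,3) J(2) by simp
qed

lemma finite_multi_idx: "finite (multi_idx D :: ('n::finite \<Rightarrow> nat) set)"
proof -
  have "\<alpha> i \<le> 2 * D - 1" if "\<alpha> \<in> multi_idx D" for \<alpha> :: "'n \<Rightarrow> nat" and i
    using member_le_sum[of i UNIV \<alpha>] that by (simp add: multi_idx_def)
  then have "(multi_idx D :: ('n \<Rightarrow> nat) set) \<subseteq> Pi\<^sub>E UNIV (\<lambda>_. {..2 * D - 1})"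
    by (auto simp: PiE_UNIV_domain)
  then show ?thesis
    by (rule finite_subset) (rule finite_PiE; simp)
qed

definition mono_p_fderiv :: "('n::finite \<Rightarrow> nat) \<Rightarrow> 'n rv \<Rightarrow> 'n rv \<Rightarrow> real" where
  "mono_p_fderiv \<alpha> y v =
     (\<Sum>i\<in>UNIV. (of_nat (\<alpha> i) * v $ i * (y $ i) ^ (\<alpha> i - 1)) * (\<Prod>j\<in>UNIV - {i}. (y $ j) ^ (\<alpha> j)))"

lemma has_derivative_mono_p: "(mono_p \<alpha> has_derivative mono_p_fderiv \<alpha> y) (at y)"
  unfolding mono_p_def[abs_def] mono_p_fderiv_def
  by (rule has_derivative_prod, rule has_derivative_power,
      rule bounded_linear.has_derivative[OF bounded_linear_vec_nth has_derivative_ident])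

lemma frechet_derivative_mono_p: "frechet_derivative (mono_p \<alpha>) (at y) = mono_p_fderiv \<alpha> y"
  by (rule frechet_derivative_at[symmetric], rule has_derivative_mono_p)

lemma continuous_on_mono_p_fderiv: "continuous_on UNIV (\<lambda>p. mono_p_fderiv \<alpha> (fst p) (snd p))"
  unfolding mono_p_fderiv_def by (intro continuous_intros)

lemma mono_p_mult: "mono_p \<alpha> x * mono_p \<beta> x = mono_p (\<lambda>i. \<alpha> i + \<beta> i) x"
  by (simp add: mono_p_def power_add prod.distrib)

inductive poly_deg_le :: "nat \<Rightarrow> ('n::finite rv \<Rightarrow> real) \<Rightarrow> bool" for k where
  monomial: "sum \<alpha> UNIV \<le> k \<Longrightarrow> poly_deg_le k (mono_p \<alpha>)"
| add: "poly_deg_le k f \<Longrightarrow> poly_deg_le k g \<Longrightarrow> poly_deg_le k (\<lambda>x. f x + g x)"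
| scale: "poly_deg_le k f \<Longrightarrow> poly_deg_le k (\<lambda>x. c * f x)"

lemma poly_deg_le_mono: "poly_deg_le k f \<Longrightarrow> k \<le> k' \<Longrightarrow> poly_deg_le k' f"
  by (induction rule: poly_deg_le.induct) (auto intro: poly_deg_le.intros)

lemma poly_deg_le_const: "poly_deg_le k (\<lambda>x. c)"
proof -
  have "poly_deg_le k (\<lambda>x. c * mono_p (\<lambda>_. 0) x)"
    by (intro poly_deg_le.scale poly_deg_le.monomial) simp
  then show ?thesis by (simp add: mono_p_def)
qed

lemma poly_deg_le_component: "poly_deg_le 1 (\<lambda>x. x $ i)"
proof -
  have "poly_deg_le 1 (mono_p (\<lambda>j. if j = i then 1 else 0))" by (rule poly_deg_le.monomial) simp
  moreover have "mono_p (\<lambda>j. if j = i then 1 else 0) = (\<lambda>x. x $ i)"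
    by (rule ext) (simp add: mono_p_def if_distrib prod.delta cong: if_cong)
  ultimately show ?thesis by simp
qed

lemma poly_deg_le_diff: "poly_deg_le k f \<Longrightarrow> poly_deg_le k g \<Longrightarrow> poly_deg_le k (\<lambda>x. f x - g x)"
  using poly_deg_le.add[of k f "\<lambda>x. (-1) * g x"] poly_deg_le.scale[of k g "-1"] by simp

lemma poly_deg_le_sum:
  "finite I \<Longrightarrow> (\<And>i. i \<in> I \<Longrightarrow> poly_deg_le k (f i)) \<Longrightarrow> poly_deg_le k (\<lambda>x. \<Sum>i\<in>I. f i x)"
  by (induction I rule: finite_induct) (auto intro: poly_deg_le.intros poly_deg_le_const)

lemma poly_deg_le_mult:
  assumes "poly_deg_le k f" "poly_deg_le m g"
  shows "poly_deg_le (k + m) (\<lambda>x. f x * g x)"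
  using assms
proof (induction arbitrary: g rule: poly_deg_le.induct)
  case (monomial \<alpha>)
  from monomial.prems show ?case
  proof (induction rule: poly_deg_le.induct)
    case (monomial \<beta>)
    have "poly_deg_le (k + m) (mono_p (\<lambda>i. \<alpha> i + \<beta> i))"
      by (rule poly_deg_le.monomial) (use monomial.hyps \<open>sum \<alpha> UNIV \<le> k\<close> in \<open>simp add: sum.distrib\<close>)
    then show ?case by (simp add: mono_p_mult)
  next
    case (add f g)
    then show ?case using poly_deg_le.add[of "k+m"] by (simp add: distrib_left)
  next
    case (scale f c)
    then show ?case using poly_deg_le.scale[of "k+m" _ c] by (simp add: algebra_simps)
  qed
next
  case (add f1 f2)
  have "poly_deg_le (k + m) (\<lambda>x. f1 x * g x + f2 x * g x)"
    by (rule poly_deg_le.add) (use add in auto)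
  then show ?case by (simp add: distrib_right)
next
  case (scale f c)
  have "poly_deg_le (k + m) (\<lambda>x. c * (f x * g x))"
    by (rule poly_deg_le.scale) (use scale in auto)
  then show ?case by (simp add: algebra_simps)
qed

lemma poly_deg_le_prod:
  "finite I \<Longrightarrow> (\<And>i. i \<in> I \<Longrightarrow> poly_deg_le k (f i)) \<Longrightarrow> poly_deg_le (k * card I) (\<lambda>x. \<Prod>i\<in>I. f i x)"
proof (induction I rule: finite_induct)
  case empty
  then show ?case using poly_deg_le_const[of 0 1] by simp
next
  case (insert i I)
  then have "poly_deg_le (k + k * card I) (\<lambda>x. f i x * (\<Prod>i\<in>I. f i x))"
    by (intro poly_deg_le_mult) auto
  then show ?case using insert by simp
qed

lemma poly_deg_le_inner_diff: "poly_deg_le 1 (\<lambda>x::'n::finite rv. w \<bullet> (x - c))"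
proof -
  have "poly_deg_le 1 (\<lambda>x::'n rv. \<Sum>k\<in>UNIV. w $ k * (x $ k - c $ k))"
    by (intro poly_deg_le_sum poly_deg_le.scale poly_deg_le_diff poly_deg_le_component
        poly_deg_le_const) auto
  then show ?thesis by (simp add: inner_vec_def)
qed

lemma poly_deg_le_norm_diff_sq: "poly_deg_le 2 (\<lambda>x::'n::finite rv. (x - c) \<bullet> (x - c))"
proof -
  have "poly_deg_le 2 (\<lambda>x::'n rv. (x $ k - c $ k) * (x $ k - c $ k))" for k
    using poly_deg_le_mult[OF poly_deg_le_diff[OF poly_deg_le_component poly_deg_le_const]
        poly_deg_le_diff[OF poly_deg_le_component poly_deg_le_const]]
    unfolding one_add_one .
  then have "poly_deg_le 2 (\<lambda>x::'n rv. \<Sum>k\<in>UNIV. (x $ k - c $ k) * (x $ k - c $ k))"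
    by (intro poly_deg_le_sum) auto
  then show ?thesis by (simp add: inner_vec_def)
qed

lemma poly_deg_le_differentiable: "poly_deg_le k f \<Longrightarrow> f differentiable (at y)"
proof (induction rule: poly_deg_le.induct)
  case (monomial \<alpha>)
  then show ?case using has_derivative_mono_p differentiable_def by blast
qed (auto intro!: differentiable_add differentiable_mult differentiable_const)

lemma poly_flat_at_points_exists:
  fixes y :: "nat \<Rightarrow> 'n::finite rv"
  assumes "\<And>i. i < m \<Longrightarrow> y i \<noteq> y m" "w \<noteq> 0"
  obtains g where "poly_deg_le (2 * m + 1) g"
    and "\<And>i. i < m \<Longrightarrow> g (y i) = 0"
    and "\<And>i. i < m \<Longrightarrow> frechet_derivative g (at (y i)) = (\<lambda>v. 0)"
    and "frechet_derivative g (at (y m)) w \<noteq> 0"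
proof
  define q where "q i x = (x - y i) \<bullet> (x - y i)" for i x
  define lin where "lin x = w \<bullet> (x - y m)" for x
  define b where "b I x = (\<Prod>i\<in>I. q i x)" for I x
  define g where "g x = lin x * b {..<m} x" for x
  have poly_b: "poly_deg_le (2 * card I) (b I)" if "finite I" for I
    unfolding b_def q_def using that by (intro poly_deg_le_prod poly_deg_le_norm_diff_sq)
  have "poly_deg_le (1 + 2 * m) g"
    unfolding g_def lin_def using poly_deg_le_mult[OF poly_deg_le_inner_diff poly_b[OF finite_lessThan]]
    by simp
  then show "poly_deg_le (2 * m + 1) g" by simp
  have flat: "(g has_derivative (\<lambda>v. 0)) (at (y i))" and zero: "g (y i) = 0" if "i < m" for i
  proof -
    have g_eq: "g = (\<lambda>x. (lin x * b ({..<m} - {i}) x) * q i x)"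
      using that by (auto simp: g_def b_def prod.remove mult_ac)
    have q_flat: "(q i has_derivative (\<lambda>v. 0)) (at (y i))"
      unfolding q_def by (rule has_derivative_eq_rhs, (rule derivative_intros)+) auto
    have "(\<lambda>x. lin x * b ({..<m} - {i}) x) differentiable (at (y i))"
      unfolding lin_def using poly_b
      by (intro differentiable_mult poly_deg_le_differentiable[OF poly_deg_le_inner_diff]
          poly_deg_le_differentiable[OF poly_b]) auto
    from has_derivative_mult_flat_zero[OF this q_flat]
    show "(g has_derivative (\<lambda>v. 0)) (at (y i))"
      unfolding g_eq by (simp add: q_def)
    show "g (y i) = 0" by (simp add: g_eq q_def)
  qed
  show "g (y i) = 0" if "i < m" for i using zero[OF that] .
  show "frechet_derivative g (at (y i)) = (\<lambda>v. 0)" if "i < m" for i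
    using flat[OF that] by (rule frechet_derivative_at[symmetric])
  have "(lin has_derivative (\<lambda>v. w \<bullet> v)) (at (y m))"
    unfolding lin_def[abs_def] by (rule has_derivative_eq_rhs, (rule derivative_intros)+) auto
  moreover have "(b {..<m} has_derivative frechet_derivative (b {..<m}) (at (y m))) (at (y m))"
    using poly_deg_le_differentiable[OF poly_b] frechet_derivative_works by blast
  ultimately have "(g has_derivative
      (\<lambda>v. lin (y m) * frechet_derivative (b {..<m}) (at (y m)) v + (w \<bullet> v) * b {..<m} (y m))) (at (y m))"
    unfolding g_def[abs_def] by (rule has_derivative_mult)
  then have "frechet_derivative g (at (y m)) w = (w \<bullet> w) * b {..<m} (y m)"
    by (simp add: frechet_derivative_at[symmetric] lin_def)
  moreover have "q i (y m) > 0" if "i < m" for i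
  proof -
    have "y m - y i \<noteq> 0" using assms(1)[OF that] by (metis right_minus_eq)
    then show ?thesis by (simp add: q_def)
  qed
  then have "b {..<m} (y m) > 0"
    unfolding b_def by (intro prod_pos) auto
  ultimately show "frechet_derivative g (at (y m)) w \<noteq> 0"
    using assms(2) by simp
qed

lemma pi1_simps [simp]:
  "pi1 (x + y) = pi1 x + pi1 y" "pi1 (c *\<^sub>R x) = c * pi1 x" "pi1 0 = 0"
  "pi1 (e1 :: 'n::{finite,wellorder} rv) = 1"
  by (auto simp: pi1_def e1_def)

locale twice_differentiable_map =
  fixes \<phi> :: "'n::{finite,wellorder} rv \<Rightarrow> 'n rv" and f' :: "'n rv \<Rightarrow> ('n rv \<Rightarrow>\<^sub>L 'n rv)"
    and f'' :: "'n rv \<Rightarrow> ('n rv \<Rightarrow>\<^sub>L ('n rv \<Rightarrow>\<^sub>L 'n rv))" and x1 v1 :: "'n rv"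
  assumes first_derivative: "\<And>x. (\<phi> has_derivative f' x) (at x)"
    and second_derivative: "\<And>x. (f' has_derivative f'' x) (at x)"
begin

definition perturbed :: "real \<Rightarrow> ('n rv \<Rightarrow> real) \<Rightarrow> 'n rv \<Rightarrow> 'n rv" where
  "perturbed t g x = \<phi> x + (t * g x) *\<^sub>R e1"

definition perturbed_fderiv :: "real \<Rightarrow> ('n rv \<Rightarrow> 'n rv \<Rightarrow> real) \<Rightarrow> 'n rv \<Rightarrow> 'n rv \<Rightarrow> 'n rv" where
  "perturbed_fderiv t g' y v = f' y v + (t * g' y v) *\<^sub>R e1"

definition perturbed_orbit :: "real \<Rightarrow> ('n rv \<Rightarrow> real) \<Rightarrow> nat \<Rightarrow> 'n rv" where
  "perturbed_orbit t g i = (perturbed t g ^^ i) x1"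

fun iter_fderiv :: "real \<Rightarrow> ('n rv \<Rightarrow> real) \<Rightarrow> ('n rv \<Rightarrow> 'n rv \<Rightarrow> real) \<Rightarrow> nat \<Rightarrow> 'n rv \<Rightarrow> 'n rv" where
  "iter_fderiv t g g' 0 = id"
| "iter_fderiv t g g' (Suc i) = perturbed_fderiv t g' (perturbed_orbit t g i) \<circ> iter_fderiv t g g' i"

abbreviation orbit :: "nat \<Rightarrow> 'n rv" where
  "orbit i \<equiv> (\<phi> ^^ i) x1"

fun tangent :: "nat \<Rightarrow> 'n rv" where
  "tangent 0 = v1"
| "tangent (Suc i) = f' (orbit i) (tangent i)"

text \<open>The recursions \<open>y\<^sub>i\<^sub>+\<^sub>1 = \<phi>\<^sub>t(y\<^sub>i)\<close> and \<open>w\<^sub>i\<^sub>+\<^sub>1 = D\<phi>\<^sub>t(y\<^sub>i) w\<^sub>i\<close>, linearised in t at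
  \<open>t = 0\<close>.\<close>

fun orbit_var :: "('n rv \<Rightarrow> real) \<Rightarrow> nat \<Rightarrow> 'n rv" where
  "orbit_var g 0 = 0"
| "orbit_var g (Suc i) = f' (orbit i) (orbit_var g i) + g (orbit i) *\<^sub>R e1"

fun tangent_var :: "('n rv \<Rightarrow> real) \<Rightarrow> ('n rv \<Rightarrow> 'n rv \<Rightarrow> real) \<Rightarrow> nat \<Rightarrow> 'n rv" where
  "tangent_var g g' 0 = 0"
| "tangent_var g g' (Suc i) =
     f'' (orbit i) (orbit_var g i) (tangent i) + g' (orbit i) (tangent i) *\<^sub>R e1
     + f' (orbit i) (tangent_var g g' i)"

lemma has_derivative_perturbed:
  assumes "(g has_derivative g' y) (at y)"
  shows "(perturbed t g has_derivative perturbed_fderiv t g' y) (at y)"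
  unfolding perturbed_def[abs_def] perturbed_fderiv_def[abs_def]
  by (rule has_derivative_eq_rhs, (rule derivative_intros first_derivative assms)+) auto

lemma has_derivative_perturbed_iter:
  assumes "\<And>y. (g has_derivative g' y) (at y)"
  shows "((perturbed t g ^^ i) has_derivative iter_fderiv t g g' i) (at x1)"
proof (induction i)
  case 0
  then show ?case by (simp add: id_def)
next
  case (Suc i)
  have "((perturbed t g \<circ> (perturbed t g ^^ i)) has_derivative
      (perturbed_fderiv t g' (perturbed_orbit t g i) \<circ> iter_fderiv t g g' i)) (at x1)"
    by (rule diff_chain_at[OF Suc])
      (unfold perturbed_orbit_def, rule has_derivative_perturbed[OF assms])
  then show ?case by (simp only: funpow.simps iter_fderiv.simps)
qed

lemma perturbed_orbit_Suc: "perturbed_orbit t g (Suc i) = perturbed t g (perturbed_orbit t g i)"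
  by (simp add: perturbed_orbit_def)

lemma perturbed_orbit_0: "perturbed_orbit 0 g i = orbit i"
proof -
  have "perturbed 0 g = \<phi>" by (rule ext) (simp add: perturbed_def)
  then show ?thesis by (simp add: perturbed_orbit_def)
qed

lemma iter_fderiv_0_tangent: "iter_fderiv 0 g g' i v1 = tangent i"
  by (induction i) (auto simp: perturbed_fderiv_def perturbed_orbit_0)

lemma has_derivative_perturbed_orbit:
  assumes "\<And>y. (g has_derivative g' y) (at y)"
  shows "((\<lambda>t. perturbed_orbit t g i) has_derivative (\<lambda>h. h *\<^sub>R orbit_var g i)) (at 0)"
proof (induction i)
  case 0
  then show ?case by (simp add: perturbed_orbit_def)
next
  case (Suc i)
  have "((\<lambda>t. \<phi> (perturbed_orbit t g i) + (t * g (perturbed_orbit t g i)) *\<^sub>R e1) has_derivative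
      (\<lambda>h. f' (orbit i) (h *\<^sub>R orbit_var g i)
        + (0 * g' (orbit i) (h *\<^sub>R orbit_var g i) + h * g (orbit i)) *\<^sub>R e1)) (at 0)"
    using has_derivative_compose[OF Suc first_derivative]
      has_derivative_mult[OF has_derivative_ident has_derivative_compose[OF Suc assms]]
    by (intro has_derivative_add has_derivative_scaleR_left) (simp_all add: perturbed_orbit_0)
  then show ?case
    unfolding perturbed_orbit_Suc perturbed_def
    by (rule has_derivative_eq_rhs) (auto simp: blinfun.scaleR_right scaleR_add_right)
qed

lemma has_derivative_perturbed_tangent:
  assumes "\<And>y. (g has_derivative g' y) (at y)"
    and "continuous_on UNIV (\<lambda>p. g' (fst p) (snd p))"
  shows "((\<lambda>t. iter_fderiv t g g' i v1) has_derivative (\<lambda>h. h *\<^sub>R tangent_var g g' i)) (at 0)"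
proof (induction i)
  case 0
  then show ?case by simp
next
  case (Suc i)
  note orbit = has_derivative_perturbed_orbit[OF assms(1), of i]
  have "isCont (\<lambda>p. g' (fst p) (snd p)) q" for q
    using assms(2) continuous_on_eq_continuous_at[of UNIV] by auto
  from isCont_o2[OF continuous_Pair this]
  have cont: "isCont (\<lambda>t. g' (perturbed_orbit t g i) (iter_fderiv t g g' i v1)) 0"
    using has_derivative_continuous[OF orbit] has_derivative_continuous[OF Suc] by simp
  have "((\<lambda>t. f' (perturbed_orbit t g i) (iter_fderiv t g g' i v1)) has_derivative
      (\<lambda>h. f' (orbit i) (h *\<^sub>R tangent_var g g' i) + f'' (orbit i) (h *\<^sub>R orbit_var g i) (tangent i)))
      (at 0)"
    using blinfun.FDERIV[OF has_derivative_compose[OF orbit second_derivative] Suc]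
    by (simp add: perturbed_orbit_0 iter_fderiv_0_tangent)
  from has_derivative_add[OF this has_derivative_scaleR_left[OF has_derivative_ident_mult_isCont[OF cont]]]
  show ?case
    by (simp add: perturbed_fderiv_def, rule has_derivative_eq_rhs)
      (auto simp: perturbed_orbit_0 iter_fderiv_0_tangent blinfun.scaleR_right blinfun.scaleR_left
        scaleR_add_right add_ac)
qed

lemma orbit_var_add: "orbit_var (\<lambda>x. g1 x + g2 x) i = orbit_var g1 i + orbit_var g2 i"
  by (induction i) (auto simp: blinfun.add_right scaleR_add_left)

lemma orbit_var_scale: "orbit_var (\<lambda>x. c * g x) i = c *\<^sub>R orbit_var g i"
  by (induction i) (auto simp: blinfun.scaleR_right scaleR_add_right)

lemma tangent_var_add:
  "tangent_var (\<lambda>x. g1 x + g2 x) (\<lambda>y v. g1' y v + g2' y v) i = tangent_var g1 g1' i + tangent_var g2 g2' i"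
  by (induction i) (auto simp: orbit_var_add blinfun.add_right blinfun.add_left scaleR_add_left algebra_simps)

lemma tangent_var_scale: "tangent_var (\<lambda>x. c * g x) (\<lambda>y v. c * g' y v) i = c *\<^sub>R tangent_var g g' i"
  by (induction i) (auto simp: orbit_var_scale blinfun.scaleR_right blinfun.scaleR_left scaleR_add_right)

lemma variations_vanish_upto:
  assumes "\<And>i. i < m \<Longrightarrow> g (orbit i) = 0" "\<And>i. i < m \<Longrightarrow> g' (orbit i) = (\<lambda>v. 0)"
  shows "k \<le> m \<Longrightarrow> orbit_var g k = 0 \<and> tangent_var g g' k = 0"
  using assms by (induction k) auto

lemma tangent_nonzero:
  assumes "\<And>y. inj (f' y)" "v1 \<noteq> 0"
  shows "tangent i \<noteq> 0"
proof (induction i)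
  case 0
  then show ?case using assms by simp
next
  case (Suc i)
  have "f' (orbit i) (tangent i) \<noteq> f' (orbit i) 0"
    using Suc assms(1) by (meson injD)
  then show ?case by simp
qed

definition H_poly :: "('n rv \<Rightarrow> real) \<Rightarrow> nat \<Rightarrow> real" where
  "H_poly g j = pi1 (tangent_var g (\<lambda>y. frechet_derivative g (at y)) j)"

lemma H_entry_eq_H_poly:
  assumes "\<alpha> \<in> multi_idx D"
  shows "H_entry D \<phi> x1 v1 j \<alpha> = H_poly (mono_p \<alpha>) j"
proof -
  have phi_c_eq: "phi_c D \<phi> (\<lambda>\<beta>. if \<beta> = \<alpha> then t else 0) = perturbed t (mono_p \<alpha>)" for t
  proof
    fix x
    have "(\<Sum>\<beta>\<in>multi_idx D. (if \<beta> = \<alpha> then t else 0) * mono_p \<beta> x) =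
        (\<Sum>\<beta>\<in>multi_idx D. if \<beta> = \<alpha> then t * mono_p \<beta> x else 0)"
      by (rule sum.cong) auto
    also have "\<dots> = t * mono_p \<alpha> x"
      using assms by (simp add: sum.delta[OF finite_multi_idx])
    finally show "phi_c D \<phi> (\<lambda>\<beta>. if \<beta> = \<alpha> then t else 0) x = perturbed t (mono_p \<alpha>) x"
      by (simp add: phi_c_def perturbed_def)
  qed
  have "frechet_derivative (perturbed t (mono_p \<alpha>) ^^ j) (at x1) = iter_fderiv t (mono_p \<alpha>) (mono_p_fderiv \<alpha>) j" for t
    by (rule frechet_derivative_at[symmetric], rule has_derivative_perturbed_iter, rule has_derivative_mono_p)
  moreover have "DERIV (\<lambda>t. pi1 (iter_fderiv t (mono_p \<alpha>) (mono_p_fderiv \<alpha>) j v1)) 0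
      :> pi1 (tangent_var (mono_p \<alpha>) (mono_p_fderiv \<alpha>) j)"
    using bounded_linear.has_derivative[OF bounded_linear_vec_nth
        has_derivative_perturbed_tangent[OF has_derivative_mono_p continuous_on_mono_p_fderiv]]
    unfolding has_field_derivative_def pi1_def
    by (rule has_derivative_eq_rhs) (auto simp: mult.commute)
  ultimately show ?thesis
    unfolding H_entry_def H_poly_def phi_c_eq frechet_derivative_mono_p
    by (simp add: DERIV_imp_deriv)
qed

lemma H_poly_row_comb_eq_0:
  assumes "\<forall>\<alpha>\<in>multi_idx D. (\<Sum>j\<in>R. a j * H_entry D \<phi> x1 v1 j \<alpha>) = 0"
    and "poly_deg_le k g" "k \<le> 2 * D - 1"
  shows "(\<Sum>j\<in>R. a j * H_poly g j) = 0"
  using assms(2,3)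
proof (induction rule: poly_deg_le.induct)
  case (monomial \<alpha>)
  then have "\<alpha> \<in> multi_idx D" by (simp add: multi_idx_def)
  then show ?case using assms(1) by (simp add: H_entry_eq_H_poly)
next
  case (add f g)
  have "f differentiable (at y)" "g differentiable (at y)" for y
    using add.hyps poly_deg_le_differentiable by blast+
  then have "(\<Sum>j\<in>R. a j * H_poly (\<lambda>x. f x + g x) j) = (\<Sum>j\<in>R. a j * H_poly f j) + (\<Sum>j\<in>R. a j * H_poly g j)"
    by (simp add: H_poly_def frechet_derivative_add_at tangent_var_add sum.distrib[symmetric] distrib_left)
  then show ?case using add by simp
next
  case (scale f c)
  have "f differentiable (at y)" for y
    using scale.hyps poly_deg_le_differentiable by blast
  then have "(\<Sum>j\<in>R. a j * H_poly (\<lambda>x. c * f x) j) = c * (\<Sum>j\<in>R. a j * H_poly f j)"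
    by (simp add: H_poly_def frechet_derivative_scale_at tangent_var_scale sum_distrib_left algebra_simps)
  then show ?case using scale by simp
qed

lemma H_poly_flat_on_orbit:
  assumes "\<And>i. i < m \<Longrightarrow> g (orbit i) = 0"
    and "\<And>i. i < m \<Longrightarrow> frechet_derivative g (at (orbit i)) = (\<lambda>v. 0)"
  shows "k \<le> m \<Longrightarrow> H_poly g k = 0"
    and "H_poly g (Suc m) = frechet_derivative g (at (orbit m)) (tangent m)"
proof -
  have vanish: "orbit_var g k = 0 \<and> tangent_var g (\<lambda>y. frechet_derivative g (at y)) k = 0" if "k \<le> m" for k
    using assms that by (rule variations_vanish_upto)
  show "k \<le> m \<Longrightarrow> H_poly g k = 0"
    using vanish by (simp add: H_poly_def)
  show "H_poly g (Suc m) = frechet_derivative g (at (orbit m)) (tangent m)"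
    using vanish[OF order_refl] by (simp add: H_poly_def)
qed

lemma in_col_span_H_poly:
  assumes "poly_deg_le (2 * D - 1) g"
  shows "in_col_span R (multi_idx D) (H_entry D \<phi> x1 v1) (H_poly g)"
  unfolding in_col_span_def using H_poly_row_comb_eq_0 assms by blast

lemma H_poly_triangular_exists:
  assumes "\<And>i. i < m \<Longrightarrow> orbit i \<noteq> orbit m" "tangent m \<noteq> 0"
  obtains g where "poly_deg_le (2 * m + 1) g" "\<And>k. k \<le> m \<Longrightarrow> H_poly g k = 0" "H_poly g (Suc m) \<noteq> 0"
proof -
  obtain g where deg: "poly_deg_le (2 * m + 1) g"
    and flat: "\<And>i. i < m \<Longrightarrow> g (orbit i) = 0"
      "\<And>i. i < m \<Longrightarrow> frechet_derivative g (at (orbit i)) = (\<lambda>v. 0)"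
    and diag: "frechet_derivative g (at (orbit m)) (tangent m) \<noteq> 0"
    using poly_flat_at_points_exists[where y = orbit, OF assms] by blast
  show ?thesis
  proof (rule that[OF deg])
    show "H_poly g k = 0" if "k \<le> m" for k
      using H_poly_flat_on_orbit(1)[OF flat that] .
    show "H_poly g (Suc m) \<noteq> 0"
      using H_poly_flat_on_orbit(2)[OF flat] diag by simp
  qed
qed

end

lemma C2_diffeo_twice_differentiable_map:
  assumes "C2_diffeo \<phi>"
  obtains f' f'' where "twice_differentiable_map \<phi> f' f''" and "\<And>y. inj (blinfun_apply (f' y))"
proof -
  obtain f' f'' where f': "\<And>x. (\<phi> has_derivative blinfun_apply (f' x)) (at x)"
    and f'': "\<And>x. (f' has_derivative blinfun_apply (f'' x)) (at x)"
    using assms unfolding C2_diffeo_def C2_def by blast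
  obtain \<psi>' where \<psi>': "\<And>x. (inv \<phi> has_derivative blinfun_apply (\<psi>' x)) (at x)"
    using assms unfolding C2_diffeo_def C2_def by blast
  have "inj (blinfun_apply (f' y))" for y
    using assms f' \<psi>' by (intro inj_derivative_of_left_inverse[of "inv \<phi>" \<phi>])
      (auto simp: C2_diffeo_def bij_is_inj)
  with f' f'' show ?thesis
    by (intro that) (unfold_locales, auto)
qed

theorem lemma12:
  fixes \<phi> :: "(real, 'n::{finite,wellorder}) vec \<Rightarrow> (real, 'n) vec"
    and x1 v1 :: "(real, 'n) vec" and D :: nat
  assumes "C2_diffeo \<phi>"
    and "norm v1 = 1"
    and "inj_on (\<lambda>j. (\<phi> ^^ (j - 1)) x1) {1..D-1}"
  shows "full_row_rank {1..D-1} (multi_idx D) (H_entry D \<phi> x1 v1)"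
proof -
  obtain f' f'' where "twice_differentiable_map \<phi> f' f''" and inj: "\<And>y. inj (blinfun_apply (f' y))"
    using C2_diffeo_twice_differentiable_map[OF assms(1)] by blast
  then interpret twice_differentiable_map \<phi> f' f'' x1 v1 by simp
  have tangent_ne_0: "tangent i \<noteq> 0" for i
    using tangent_nonzero inj assms(2) by force
  show ?thesis
  proof (rule full_row_rankI_triangular)
    fix J assume J: "J \<in> {1..D-1}"
    have distinct: "orbit i \<noteq> orbit (J - 1)" if "i < J - 1" for i
    proof -
      have "i + 1 \<in> {1..D-1}" using that J by auto
      from inj_onD[OF assms(3) _ this J] show ?thesis using that by fastforce
    qed
    obtain g where deg: "poly_deg_le (2 * (J - 1) + 1) g"
      and "\<And>k. k \<le> J - 1 \<Longrightarrow> H_poly g k = 0" "H_poly g (Suc (J - 1)) \<noteq> 0"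
      using H_poly_triangular_exists[OF distinct tangent_ne_0] by blast
    moreover have "poly_deg_le (2 * D - 1) g"
      using deg by (rule poly_deg_le_mono) (use J in auto)
    ultimately show "\<exists>\<Lambda>. in_col_span {1..D-1} (multi_idx D) (H_entry D \<phi> x1 v1) \<Lambda> \<and>
        (\<forall>k\<in>{1..D-1}. k < J \<longrightarrow> \<Lambda> k = 0) \<and> \<Lambda> J \<noteq> 0"
      using J by (intro exI[of _ "H_poly g"] conjI in_col_span_H_poly) auto
  qed simp
qed

end
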